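(* Let $k,\ell\ge 1$ and let $R=[0,\ell]\times[0,k]$. Consider partially directed walks on $\mathbb Z^2$ (self-avoiding walks using only North $(0,1)$, East $(1,0)$ and South $(0,-1)$ unit steps) that start at $(0,0)$, stay in $R$, and end at $(\ell,k)$. Such a walk is generated by the following random procedure: starting from $(0,0)$, at each time one chooses uniformly at random one of the eligible steps, where a step (N, E or S) is eligible if, once appended to the current walk, it gives a self-avoiding N/E/S walk staying in $R$ that can be extended by N/E/S steps into such a walk ending at $(\ell,k)$; the procedure stops on reaching $(\ell,k)$. Let $p(w_0)$ denote the probability of obtaining the walk $w_0$. Write $w_0=w\,\mathsf E\,\mathsf N\cdots\mathsf N$, i.e. $w$ is the prefix of $w_0$ preceding its last East step (heights measured from the bottom side $y=0$). Then $$\frac1{p(w_0)}=2\cdot 3^{h(w)}\,2^{h_c(w)}\,2^{v(w)}\,1^{v_c(w)},$$ where $h(w)$ is the number of horizontal steps of $w$ lying neither at height $0$ nor at height $k$; $h_c(w)$ is the number of horizontal steps of $w$ lying at height $0$ or $k$; $v(w)$ is the number of vertical steps of $w$ ending neither at height $0$ nor at height $k$; and $v_c(w)$ is the number of vertical steps of $w$ ending at height $0$ or $k$. *)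

theory Defs
  imports Complex_Main
begin

datatype step = N | E | S

fun delta :: "step \<Rightarrow> int \<times> int" where
  "delta N = (0, 1)"
| "delta E = (1, 0)"
| "delta S = (0, -1)"

definition endpt :: "step list \<Rightarrow> int \<times> int" where
  "endpt ws = (sum_list (map (fst \<circ> delta) ws), sum_list (map (snd \<circ> delta) ws))"

definition vertices :: "step list \<Rightarrow> (int \<times> int) list" where
  "vertices ws = map (\<lambda>i. endpt (take i ws)) [0..<Suc (length ws)]"

definition self_avoiding :: "step list \<Rightarrow> bool" where
  "self_avoiding ws \<longleftrightarrow> distinct (vertices ws)"

definition in_rect :: "int \<Rightarrow> int \<Rightarrow> step list \<Rightarrow> bool" where
  "in_rect l k ws \<longleftrightarrow> set (vertices ws) \<subseteq> {0..l} \<times> {0..k}"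

definition admissible :: "int \<Rightarrow> int \<Rightarrow> step list \<Rightarrow> bool" where
  "admissible l k ws \<longleftrightarrow> self_avoiding ws \<and> in_rect l k ws"

definition complete_walk :: "int \<Rightarrow> int \<Rightarrow> step list \<Rightarrow> bool" where
  "complete_walk l k ws \<longleftrightarrow> admissible l k ws \<and> endpt ws = (l, k)"

definition eligible :: "int \<Rightarrow> int \<Rightarrow> step list \<Rightarrow> step set" where
  "eligible l k u = {s. \<exists>v. complete_walk l k (u @ [s] @ v)}"

definition prob_walk :: "int \<Rightarrow> int \<Rightarrow> step list \<Rightarrow> real" where
  "prob_walk l k w0 = (\<Prod>i<length w0. 1 / real (card (eligible l k (take i w0))))"

definition h_stat :: "int \<Rightarrow> step list \<Rightarrow> nat" where
  "h_stat k w = card {i. i < length w \<and> w ! i = E \<and> snd (endpt (take i w)) \<notin> {0, k}}"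

definition hc_stat :: "int \<Rightarrow> step list \<Rightarrow> nat" where
  "hc_stat k w = card {i. i < length w \<and> w ! i = E \<and> snd (endpt (take i w)) \<in> {0, k}}"

definition v_stat :: "int \<Rightarrow> step list \<Rightarrow> nat" where
  "v_stat k w = card {i. i < length w \<and> w ! i \<noteq> E \<and> snd (endpt (take (Suc i) w)) \<notin> {0, k}}"

definition vc_stat :: "int \<Rightarrow> step list \<Rightarrow> nat" where
  "vc_stat k w = card {i. i < length w \<and> w ! i \<noteq> E \<and> snd (endpt (take (Suc i) w)) \<in> {0, k}}"

end

theory Submission
  imports Defs
begin

text \<open>Before the last column every prefix that stays in R and does not immediately reverse
  a vertical step can be completed, so the eligible steps are exactly the steps that stay in R
  without reversing. After a step ending at height y there are 3 or 2 of them following an East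
  step and 2 or 1 following a vertical step, according as y is interior or on the top/bottom
  side, and there are 2 at the start. After the last East step only North is eligible, since a
  South step in the last column can never be undone.\<close>

lemma endpt_Nil [simp]: "endpt [] = (0, 0)"
  by (simp add: endpt_def)

lemma endpt_append:
  "endpt (a @ b) = (fst (endpt a) + fst (endpt b), snd (endpt a) + snd (endpt b))"
  by (simp add: endpt_def)

lemma endpt_Cons: "endpt (s # b) = (fst (delta s) + fst (endpt b), snd (delta s) + snd (endpt b))"
  by (simp add: endpt_def)

lemma endpt_snoc: "endpt (a @ [s]) = (fst (endpt a) + fst (delta s), snd (endpt a) + snd (delta s))"
  by (simp add: endpt_def)

lemma endpt_replicate [simp]: "endpt (replicate n s) = (int n * fst (delta s), int n * snd (delta s))"
  by (induction n) (auto simp: endpt_Cons algebra_simps)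

lemma fst_endpt_nonneg: "0 \<le> fst (endpt t)"
proof (induction t)
  case (Cons s t)
  then show ?case by (cases s) (auto simp: endpt_Cons)
qed simp

lemma fst_endpt_take_le: "fst (endpt (take i t)) \<le> fst (endpt t)"
  using endpt_append[of "take i t" "drop i t"] fst_endpt_nonneg[of "drop i t"] by simp

lemma E_notin_if_fst_endpt_zero: "fst (endpt t) = 0 \<Longrightarrow> E \<notin> set t"
proof (induction t)
  case (Cons s t)
  then show ?case using fst_endpt_nonneg[of t] by (cases s) (auto simp: endpt_Cons)
qed simp

lemma snd_endpt_nonpos_if_N_notin: "N \<notin> set t \<Longrightarrow> snd (endpt t) \<le> 0"
proof (induction t)
  case (Cons s t)
  then show ?case by (cases s) (auto simp: endpt_Cons)
qed simp

lemma vertices_Nil [simp]: "vertices [] = [(0, 0)]"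
  by (simp add: vertices_def)

lemma vertices_snoc: "vertices (u @ [s]) = vertices u @ [endpt (u @ [s])]"
  unfolding vertices_def by (simp del: upt_Suc add: upt_Suc_append)

lemma set_vertices: "set (vertices t) = {endpt (take i t) | i. i \<le> length t}"
  unfolding vertices_def by (auto simp del: upt_Suc simp: less_Suc_eq_le)

lemma endpt_in_vertices: "endpt u \<in> set (vertices u)"
  by (auto simp: set_vertices intro: exI[of _ "length u"])

lemma fst_le_fst_endpt: "p \<in> set (vertices t) \<Longrightarrow> fst p \<le> fst (endpt t)"
  using fst_endpt_take_le by (auto simp: set_vertices)

lemma vertices_append_prefix: "\<exists>r. vertices (a @ b) = vertices a @ r"
proof (induction b rule: rev_induct)
  case (snoc s b)
  then show ?case using vertices_snoc[of "a @ b" s] by auto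
qed simp

lemma self_avoiding_appendD: "self_avoiding (a @ b) \<Longrightarrow> self_avoiding a"
  using vertices_append_prefix[of a b] by (auto simp: self_avoiding_def)

lemma admissible_appendD: "admissible l k (a @ b) \<Longrightarrow> admissible l k a"
  using vertices_append_prefix[of a b]
  by (auto simp: admissible_def self_avoiding_def in_rect_def)

lemma admissible_endpt: "admissible l k u \<Longrightarrow> endpt u \<in> {0..l} \<times> {0..k}"
  using endpt_in_vertices[of u] by (auto simp: admissible_def in_rect_def)

definition backtracks :: "step list \<Rightarrow> step \<Rightarrow> bool" where
  "backtracks u s \<longleftrightarrow> u \<noteq> [] \<and> {last u, s} = {N, S}"

lemma self_avoiding_not_backtracks:
  assumes "self_avoiding (u @ s # v)"
  shows "\<not> backtracks u s"
proof
  assume "backtracks u s"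
  then obtain u' t where u: "u = u' @ [t]" and ts: "{t, s} = {N, S}"
    by (metis append_butlast_last_id backtracks_def)
  have "self_avoiding (u' @ [t] @ [s])"
    using assms self_avoiding_appendD[of "u' @ [t, s]" v] u by simp
  moreover have "endpt (u' @ [t] @ [s]) = endpt u'"
    using ts by (auto simp: endpt_def doubleton_eq_iff)
  ultimately show False
    using endpt_in_vertices[of u'] vertices_snoc[of "u' @ [t]" s] vertices_snoc[of u' t]
    by (simp add: self_avoiding_def)
qed

text \<open>A self-avoiding N/E/S walk cannot reenter its current column, so the part of that column
  already visited lies entirely below (or above) the current point, depending on the last step.\<close>
lemma column_below_or_above:
  assumes "self_avoiding u" "p \<in> set (vertices u)" "fst p = fst (endpt u)"
  shows "(\<not> backtracks u N \<longrightarrow> snd p \<le> snd (endpt u)) \<and>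
         (\<not> backtracks u S \<longrightarrow> snd (endpt u) \<le> snd p)"
  using assms
proof (induction u arbitrary: p rule: rev_induct)
  case (snoc s u)
  have sa: "self_avoiding u" using snoc.prems(1) self_avoiding_appendD by blast
  show ?case
  proof (cases "p = endpt (u @ [s])")
    case False
    then have p: "p \<in> set (vertices u)" using snoc.prems(2) by (simp add: vertices_snoc)
    have "\<not> backtracks u s" using snoc.prems(1) self_avoiding_not_backtracks[of u s "[]"] by simp
    then show ?thesis
      using snoc.IH[OF sa p] snoc.prems(3) fst_le_fst_endpt[OF p]
      by (cases s) (auto simp: endpt_snoc backtracks_def)
  qed simp
qed simp

lemma admissible_snoc_iff:
  assumes "admissible l k u"
  shows "admissible l k (u @ [s]) \<longleftrightarrow> endpt (u @ [s]) \<in> {0..l} \<times> {0..k} \<and> \<not> backtracks u s"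
proof
  assume "admissible l k (u @ [s])"
  then show "endpt (u @ [s]) \<in> {0..l} \<times> {0..k} \<and> \<not> backtracks u s"
    using admissible_endpt self_avoiding_not_backtracks[of u s "[]"] by (auto simp: admissible_def)
next
  assume new: "endpt (u @ [s]) \<in> {0..l} \<times> {0..k} \<and> \<not> backtracks u s"
  have "endpt (u @ [s]) \<notin> set (vertices u)"
  proof
    assume p: "endpt (u @ [s]) \<in> set (vertices u)"
    show False
    proof (cases s)
      case E
      then show False using fst_le_fst_endpt[OF p] by (simp add: endpt_snoc)
    next
      case N
      then show False
        using column_below_or_above[OF _ p] assms new by (auto simp: admissible_def endpt_snoc)
    next
      case S
      then show False
        using column_below_or_above[OF _ p] assms new by (auto simp: admissible_def endpt_snoc)
    qed
  qed
  then show "admissible l k (u @ [s])"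
    using assms new by (auto simp: admissible_def self_avoiding_def in_rect_def vertices_snoc)
qed

lemma admissible_append_replicate_N:
  assumes "admissible l k u" "\<not> backtracks u N" "snd (endpt u) + int n \<le> k"
  shows "admissible l k (u @ replicate n N)"
  using assms
proof (induction n arbitrary: u)
  case (Suc n)
  have "admissible l k (u @ [N])"
    using Suc.prems admissible_endpt[OF Suc.prems(1)] by (auto simp: admissible_snoc_iff endpt_snoc)
  moreover have "\<not> backtracks (u @ [N]) N" by (simp add: backtracks_def)
  ultimately show ?case
    using Suc.IH[of "u @ [N]"] Suc.prems(3) by (simp add: endpt_snoc)
qed simp

lemma admissible_append_replicate_E:
  assumes "admissible l k u" "fst (endpt u) + int n \<le> l"
  shows "admissible l k (u @ replicate n E)"
  using assms
proof (induction n arbitrary: u)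
  case (Suc n)
  have "admissible l k (u @ [E])"
    using Suc.prems admissible_endpt[OF Suc.prems(1)]
    by (auto simp: admissible_snoc_iff endpt_snoc backtracks_def)
  then show ?case
    using Suc.IH[of "u @ [E]"] Suc.prems(2) by (simp add: endpt_snoc)
qed simp

text \<open>Away from the last column an East step can always be completed: go East once,
  then North up to the top side, then East along it.\<close>
lemma E_eligible:
  assumes "admissible l k u" "fst (endpt u) < l"
  shows "E \<in> eligible l k u"
proof -
  obtain x y where xy: "endpt u = (x, y)" by fastforce
  have rect: "0 \<le> x" "0 \<le> y" "y \<le> k" using admissible_endpt[OF assms(1)] xy by auto
  define v where "v = replicate (nat (k - y)) N @ replicate (nat (l - x - 1)) E"
  have "admissible l k (u @ [E])"
    using assms rect xy by (auto simp: admissible_snoc_iff endpt_snoc backtracks_def)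
  then have "admissible l k ((u @ [E]) @ replicate (nat (k - y)) N)"
    using rect xy by (intro admissible_append_replicate_N) (auto simp: endpt_snoc backtracks_def)
  then have "admissible l k (((u @ [E]) @ replicate (nat (k - y)) N) @ replicate (nat (l - x - 1)) E)"
    by (rule admissible_append_replicate_E) (use assms(2) rect xy in \<open>simp add: endpt_append endpt_Cons\<close>)
  then have "admissible l k (u @ [E] @ v)" by (simp add: v_def)
  moreover have "endpt (u @ [E] @ v) = (l, k)"
    using assms(2) rect xy by (simp add: v_def endpt_append endpt_Cons)
  ultimately have "complete_walk l k (u @ [E] @ v)" by (simp add: complete_walk_def)
  then show ?thesis unfolding eligible_def by blast
qed

lemma eligible_imp_admissible: "s \<in> eligible l k u \<Longrightarrow> admissible l k (u @ [s])"
  using admissible_appendD[of l k "u @ [s]"] by (auto simp: eligible_def complete_walk_def)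

lemma eligible_before_last_column:
  assumes "admissible l k u" "fst (endpt u) < l"
  shows "eligible l k u = {s. endpt (u @ [s]) \<in> {0..l} \<times> {0..k} \<and> \<not> backtracks u s}"
proof -
  have "s \<in> eligible l k u" if "admissible l k (u @ [s])" for s
  proof (cases "s = E")
    case True
    then show ?thesis using E_eligible[OF assms] by simp
  next
    case False
    then have "fst (endpt (u @ [s])) < l" using assms(2) by (cases s) (auto simp: endpt_snoc)
    then have "E \<in> eligible l k (u @ [s])" using E_eligible[OF that] by blast
    then show ?thesis unfolding eligible_def by fastforce
  qed
  then have "eligible l k u = {s. admissible l k (u @ [s])}"
    using eligible_imp_admissible by blast
  then show ?thesis using admissible_snoc_iff[OF assms(1)] by simp
qed

definition branching :: "int \<Rightarrow> step list \<Rightarrow> nat" where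
  "branching k u =
    (if last u = E then (if snd (endpt u) \<in> {0, k} then 2 else 3)
     else (if snd (endpt u) \<in> {0, k} then 1 else 2))"

lemma card_eligible_before_last_column:
  assumes "admissible l k u" "u \<noteq> []" "fst (endpt u) < l" "0 < k"
  shows "card (eligible l k u) = branching k u"
proof -
  obtain u' t where u: "u = u' @ [t]" using assms(2) by (metis append_butlast_last_id)
  obtain x y where xy: "endpt u = (x, y)" by fastforce
  have "endpt u' \<in> {0..l} \<times> {0..k}" using admissible_appendD admissible_endpt assms(1) u by blast
  then have before: "0 \<le> y - snd (delta t)" "y - snd (delta t) \<le> k" using xy u by (auto simp: endpt_snoc)
  have now: "0 \<le> x" "x < l" "0 \<le> y" "y \<le> k" using admissible_endpt[OF assms(1)] assms(3) xy by auto
  have elig: "s \<in> eligible l k u \<longleftrightarrow> s = E \<or> s = N \<and> y < k \<and> t \<noteq> S \<or> s = S \<and> 0 < y \<and> t \<noteq> N"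
    for s
  proof -
    have "endpt (u @ [s]) = (x + fst (delta s), y + snd (delta s))" using xy by (simp add: endpt_snoc)
    moreover have "backtracks u s \<longleftrightarrow> {t, s} = {N, S}" using u by (simp add: backtracks_def)
    ultimately show ?thesis
      using now by (cases s) (auto simp: eligible_before_last_column[OF assms(1,3)] doubleton_eq_iff)
  qed
  show ?thesis
  proof (cases t)
    case E
    then have "eligible l k u = {E} \<union> (if y < k then {N} else {}) \<union> (if 0 < y then {S} else {})"
      using elig by auto
    then show ?thesis using E now assms(4) u xy by (simp add: branching_def card_insert_if)
  next
    case N
    then have "eligible l k u = {E} \<union> (if y < k then {N} else {})"
      using elig by auto
    then show ?thesis using N before now u xy by (simp add: branching_def card_insert_if)
  next
    case S
    then have "eligible l k u = {E} \<union> (if 0 < y then {S} else {})"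
      using elig by auto
    then show ?thesis using S before now u xy by (simp add: branching_def card_insert_if)
  qed
qed

lemma card_eligible_Nil:
  assumes "1 \<le> l" "1 \<le> k"
  shows "card (eligible l k []) = 2"
proof -
  have "eligible l k [] = {E, N}"
    using assms eligible_before_last_column[of l k "[]"]
    by (auto simp: admissible_def self_avoiding_def in_rect_def endpt_def backtracks_def
        elim: delta.elims)
  then show ?thesis by simp
qed

lemma N_notin_after_S:
  assumes "self_avoiding (u @ S # v)" "E \<notin> set v"
  shows "N \<notin> set v"
  using assms
proof (induction v arbitrary: u)
  case (Cons s v)
  have "\<not> backtracks (u @ [S]) s" using Cons.prems(1) self_avoiding_not_backtracks[of "u @ [S]"] by simp
  then have "s = S" using Cons.prems(2) by (cases s) (auto simp: backtracks_def)
  then show ?case using Cons.IH[of "u @ [S]"] Cons.prems by simp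
qed simp

text \<open>In the last column no East step remains and after a South step North would backtrack,
  so the walk could only descend and would never reach (l, k).\<close>
lemma complete_walk_S_before_last_column:
  assumes "complete_walk l k (u @ S # v)"
  shows "fst (endpt u) < l"
proof (rule ccontr)
  assume "\<not> fst (endpt u) < l"
  moreover have "endpt u \<in> {0..l} \<times> {0..k}"
    using assms admissible_appendD admissible_endpt by (fastforce simp: complete_walk_def)
  ultimately have u: "fst (endpt u) = l" "snd (endpt u) \<le> k" by auto
  have e: "endpt (u @ S # v) = (l, k)" using assms by (simp add: complete_walk_def)
  then have "E \<notin> set v" using u E_notin_if_fst_endpt_zero by (simp add: endpt_append endpt_Cons)
  then have "N \<notin> set v"
    using assms N_notin_after_S unfolding complete_walk_def admissible_def by blast
  then show False
    using e u snd_endpt_nonpos_if_N_notin[of v] by (simp add: endpt_append endpt_Cons)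
qed

lemma eligible_last_column:
  assumes "complete_walk l k (u @ N # v)" "fst (endpt u) = l"
  shows "eligible l k u = {N}"
proof -
  have "s = N" if "s \<in> eligible l k u" for s
  proof (cases s)
    case E
    then show ?thesis
      using that eligible_imp_admissible admissible_endpt assms(2) by (fastforce simp: endpt_snoc)
  next
    case S
    then show ?thesis
      using that complete_walk_S_before_last_column assms(2) by (fastforce simp: eligible_def)
  qed
  moreover have "N \<in> eligible l k u" using assms(1) by (auto simp: eligible_def)
  ultimately show ?thesis by blast
qed

lemma prod_lessThan_if: "(\<Prod>j<n. if P j then c else 1) = c ^ card {j. j < n \<and> P j}"
  for c :: "'a :: comm_monoid_mult" and n :: nat
proof -
  have "(\<Prod>j<n. if P j then c else 1) = (\<Prod>j\<in>{j \<in> {..<n}. P j}. c)"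
    by (rule prod.inter_filter[symmetric]) simp
  moreover have "{j \<in> {..<n}. P j} = {j. j < n \<and> P j}" by auto
  ultimately show ?thesis by simp
qed

lemma prod_branching:
  "(\<Prod>j<length w. branching k (take (Suc j) w)) = 3 ^ h_stat k w * 2 ^ hc_stat k w * 2 ^ v_stat k w"
proof -
  have "branching k (take (Suc j) w) =
      (if w ! j = E \<and> snd (endpt (take j w)) \<notin> {0, k} then 3 else 1) *
      (if w ! j = E \<and> snd (endpt (take j w)) \<in> {0, k} then 2 else 1) *
      (if w ! j \<noteq> E \<and> snd (endpt (take (Suc j) w)) \<notin> {0, k} then 2 else 1)" if "j < length w" for j
    using that by (simp add: take_Suc_conv_app_nth branching_def endpt_snoc)
  then show ?thesis
    by (simp add: prod.distrib prod_lessThan_if h_stat_def hc_stat_def v_stat_def)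
qed

lemma prod_lessThan_add: "(\<Prod>i<n + m. f i) = (\<Prod>i<n. f i) * (\<Prod>i<m. f (n + i))"
  for f :: "nat \<Rightarrow> 'a :: comm_monoid_mult"
  by (induction m) (simp_all add: mult.assoc)

lemma inverse_prob_walk: "1 / prob_walk l k w0 = (\<Prod>i<length w0. real (card (eligible l k (take i w0))))"
  by (simp add: prob_walk_def prod_dividef)

theorem lemma2p1:
  fixes l k :: int and w0 w :: "step list" and m :: nat
  assumes "l \<ge> 1" and "k \<ge> 1"
    and "complete_walk l k w0"
    and "w0 = w @ [E] @ replicate m N"
  shows "1 / prob_walk l k w0
           = 2 * 3 ^ h_stat k w * 2 ^ hc_stat k w * 2 ^ v_stat k w * 1 ^ vc_stat k w"
proof -
  let ?c = "\<lambda>i. card (eligible l k (take i w0))"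
  have adm: "admissible l k (take i w0)" for i
    using assms(3) admissible_appendD[of l k "take i w0" "drop i w0"] by (simp add: complete_walk_def)
  have fst_w: "fst (endpt w) = l - 1"
    using assms(3,4) by (simp add: complete_walk_def endpt_append endpt_Cons)
  have walk: "?c (Suc j) = branching k (take (Suc j) w)" if "j < length w" for j
  proof -
    have "take (Suc j) w0 = take (Suc j) w" using that assms(4) by simp
    moreover have "fst (endpt (take (Suc j) w)) < l" using fst_endpt_take_le[of "Suc j" w] fst_w by simp
    ultimately show ?thesis
      using card_eligible_before_last_column adm[of "Suc j"] that assms(2) by fastforce
  qed
  have last_column: "?c (Suc (length w + t)) = 1" if "t < m" for t
  proof -
    have "w0 = take (Suc (length w + t)) w0 @ N # replicate (m - Suc t) N"
      using that assms(4) by (simp add: replicate_add[symmetric] flip: replicate_Suc)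
    moreover have "fst (endpt (take (Suc (length w + t)) w0)) = l"
      using assms(4) fst_w by (simp add: endpt_append endpt_Cons)
    ultimately have "eligible l k (take (Suc (length w + t)) w0) = {N}"
      using eligible_last_column assms(3) by metis
    then show ?thesis by simp
  qed
  have "length w0 = Suc (length w + m)" using assms(4) by simp
  then have "(\<Prod>i<length w0. ?c i) =
      ?c 0 * ((\<Prod>j<length w. ?c (Suc j)) * (\<Prod>t<m. ?c (Suc (length w + t))))"
    by (simp only: prod.lessThan_Suc_shift prod_lessThan_add)
  also have "\<dots> = 2 * 3 ^ h_stat k w * 2 ^ hc_stat k w * 2 ^ v_stat k w"
    using walk last_column card_eligible_Nil[OF assms(1,2)] prod_branching[of k w] by simp
  finally show ?thesis by (simp add: inverse_prob_walk flip: of_nat_prod)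
qed

end
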